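(* Assume $m_0:=\int t\,\mathcal{T}(\mathrm{d}t)<\infty$. For every reset law $\mathcal{R}$, with $T\sim\mathcal{T}$ and $R\sim\mathcal{R}$ independent, $$\mathcal{T}^{\mathcal{R}}[\mathrm{id}]=\frac{\mathsf{E}[T\wedge R]}{\mathsf{P}(T\leq R)}=\frac{\int\left(\int_0^r\overline{F}(u)\,\mathrm{d}u\right)\mathcal{R}(\mathrm{d}r)}{\int F(r)\,\mathcal{R}(\mathrm{d}r)},$$ and $$\inf_{t\in(0,\infty)}\frac{\int_0^t\overline{F}(u)\,\mathrm{d}u}{F(t)}\leq\mathcal{T}^{\mathcal{R}}[\mathrm{id}]\leq\sup_{t\in(0,\infty)}\frac{\int_0^t\overline{F}(u)\,\mathrm{d}u}{F(t)}.$$ Moreover $\sup_{\mathcal{R}}\mathcal{T}^{\mathcal{R}}[\mathrm{id}]=\sup_{r\in(0,\infty)}\mathcal{T}^{\delta_r}[\mathrm{id}]=\sup_{t\in(0,\infty)}\frac{\int_0^t\overline{F}(u)\,\mathrm{d}u}{F(t)}$, and the same with $\inf$ in place of $\sup$ throughout, where $\sup_{\mathcal{R}}$, $\inf_{\mathcal{R}}$ range over all reset laws.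
   Context: Standing assumptions: $\mathcal{T}$ is a probability law on the Borel sets of $[0,\infty]$ with $\mathcal{T}((0,\infty])>0$ and $\inf\mathrm{supp}(\mathcal{T})=0$; $\overline{F}(t):=\mathcal{T}((t,\infty])$ and $F:=1-\overline{F}$ on $[0,\infty)$, with $F(\infty):=1$, $\overline{F}(\infty):=0$. $\mathcal{Q}[\mathrm{id}]:=\int t\,\mathcal{Q}(\mathrm{d}t)$. A reset law is a probability law $\mathcal{R}$ on the Borel sets of $[0,\infty]$ with $\mathcal{R}((0,\infty])>0$ and $\mathcal{R}([0,\infty))>0$. Given a reset law $\mathcal{R}$: let $(T_k)$ be i.i.d. with law $\mathcal{T}$ and $(R_k)$ an independent i.i.d. sequence with law $\mathcal{R}$; $\mathcal{T}^{\mathcal{R}}$ is the law of $\tilde T$ defined a.s. by $\tilde T=R_1+\cdots+R_{k-1}+T_k$ on $\{R_1<T_1,\ldots,R_{k-1}<T_{k-1},T_k\leq R_k\}$, $k\in\mathbb{N}$. $\delta_r$ is the Dirac mass at $r$. *)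

theory Defs
  imports "HOL-Probability.Probability"
begin

text \<open>Laws on [0,\<infinity>] are measures on the Borel sets of ennreal.\<close>

definition measure_support :: "ennreal measure \<Rightarrow> ennreal set" where
  "measure_support M = {x. \<forall>U. open U \<longrightarrow> x \<in> U \<longrightarrow> emeasure M U > 0}"

definition is_law :: "ennreal measure \<Rightarrow> bool" where
  "is_law M \<longleftrightarrow> prob_space M \<and> sets M = sets borel"

definition standing_T :: "ennreal measure \<Rightarrow> bool" where
  "standing_T T \<longleftrightarrow> is_law T \<and> emeasure T {0<..} > 0 \<and> Inf (measure_support T) = 0"

definition reset_law :: "ennreal measure \<Rightarrow> bool" where
  "reset_law R \<longleftrightarrow> is_law R \<and> emeasure R {0<..} > 0 \<and> emeasure R {..<\<infinity>} > 0"

text \<open>Survival function and distribution function (F(\<infinity>) = 1, Fbar(\<infinity>) = 0).\<close>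
definition Fbar :: "ennreal measure \<Rightarrow> ennreal \<Rightarrow> real" where
  "Fbar T t = measure T {t<..}"

definition Fdist :: "ennreal measure \<Rightarrow> ennreal \<Rightarrow> real" where
  "Fdist T t = 1 - Fbar T t"

definition intFbar :: "ennreal measure \<Rightarrow> ennreal \<Rightarrow> ennreal" where
  "intFbar T r = (\<integral>\<^sup>+ u. indicator {u::real. 0 \<le> u \<and> ennreal u < r} u * ennreal (Fbar T (ennreal u)) \<partial>lborel)"

definition mean :: "ennreal measure \<Rightarrow> ennreal" where
  "mean Q = (\<integral>\<^sup>+ t. t \<partial>Q)"

text \<open>Underlying probability space: i.i.d. pairs (T_k, R_k), k = 0,1,2,...\<close>
definition reset_space :: "ennreal measure \<Rightarrow> ennreal measure \<Rightarrow> (nat \<Rightarrow> ennreal \<times> ennreal) measure" where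
  "reset_space T R = PiM UNIV (\<lambda>_::nat. T \<Otimes>\<^sub>M R)"

text \<open>The reset time: R_0 + ... + R_{k-1} + T_k where k is the first index with T_k \<le> R_k
  (so R_j < T_j for j < k).  Off the null event that no such k exists, the value is arbitrary (0).\<close>
definition reset_time :: "(nat \<Rightarrow> ennreal \<times> ennreal) \<Rightarrow> ennreal" where
  "reset_time \<omega> = (if \<exists>k. fst (\<omega> k) \<le> snd (\<omega> k)
     then (let k = (LEAST k. fst (\<omega> k) \<le> snd (\<omega> k)) in (\<Sum>j<k. snd (\<omega> j)) + fst (\<omega> k))
     else 0)"

definition reset_law_of :: "ennreal measure \<Rightarrow> ennreal measure \<Rightarrow> ennreal measure" where
  "reset_law_of T R = distr (reset_space T R) borel reset_time"

definition ratio :: "ennreal measure \<Rightarrow> real \<Rightarrow> ennreal" where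
  "ratio T t = intFbar T (ennreal t) / ennreal (Fdist T (ennreal t))"

end

(*
  Each reset cycle independently ends in success (T_k \<le> R_k) with probability P(T \<le> R) and
  lasts min T_k R_k, so the mean reset time is a geometric series with sum E[min T R] / P(T \<le> R).
  Fubini turns numerator and denominator into \<integral> intFbar T dR and \<integral> F dR. For every
  r \<in> [0,\<infinity>] the value intFbar T r lies between (inf ratio) F r and (sup ratio) F r, so the
  quotient of the integrals lies between the infimum and the supremum of the ratio, and the Dirac
  reset laws attain every value of the ratio.
*)

theory Submission
  imports Defs
begin

lemma is_lawD:
  assumes "is_law M"
  shows "prob_space M" and "sets M = sets borel" and "space M = UNIV"
  using assms sets_eq_imp_space_eq[of M borel] by (auto simp: is_law_def)

section \<open>Independent coordinates\<close>

lemma nn_integral_PiM_prod_components: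
  fixes f :: "'i \<Rightarrow> 'a \<Rightarrow> ennreal"
  assumes M: "prob_space M" and J: "finite J" and f: "\<And>i. i \<in> J \<Longrightarrow> f i \<in> borel_measurable M"
  shows "(\<integral>\<^sup>+\<omega>. (\<Prod>i\<in>J. f i (\<omega> i)) \<partial>PiM UNIV (\<lambda>_. M)) = (\<Prod>i\<in>J. \<integral>\<^sup>+x. f i x \<partial>M)"
proof -
  interpret P: product_prob_space "\<lambda>_::'i. M" UNIV
    using M by (simp add: product_prob_space_def product_prob_space_axioms_def
        product_sigma_finite_def prob_space_imp_sigma_finite)
  have meas: "(\<lambda>x. \<Prod>i\<in>J. f i (x i)) \<in> borel_measurable (PiM J (\<lambda>_. M))"
    using f by (intro borel_measurable_prod_ennreal)
      (auto intro!: measurable_compose[OF measurable_component_singleton])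
  have "(\<integral>\<^sup>+\<omega>. (\<Prod>i\<in>J. f i (\<omega> i)) \<partial>PiM UNIV (\<lambda>_. M))
      = (\<integral>\<^sup>+\<omega>. (\<Prod>i\<in>J. f i (restrict \<omega> J i)) \<partial>PiM UNIV (\<lambda>_. M))"
    by (intro nn_integral_cong prod.cong) auto
  also have "\<dots> = (\<integral>\<^sup>+x. (\<Prod>i\<in>J. f i (x i))
      \<partial>distr (PiM UNIV (\<lambda>_. M)) (PiM J (\<lambda>_. M)) (\<lambda>x. restrict x J))"
    using meas by (subst nn_integral_distr) (auto intro!: measurable_restrict_subset)
  also have "\<dots> = (\<integral>\<^sup>+x. (\<Prod>i\<in>J. f i (x i)) \<partial>PiM J (\<lambda>_. M))"
    using J by (subst P.distr_PiM_restrict_finite) auto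
  also have "\<dots> = (\<Prod>i\<in>J. \<integral>\<^sup>+x. f i x \<partial>M)"
    using J f by (subst P.product_nn_integral_prod) auto
  finally show ?thesis .
qed

lemma nn_integral_PiM_prefix_prod:
  fixes f g :: "'a \<Rightarrow> ennreal"
  assumes M: "prob_space M" and [measurable]: "f \<in> borel_measurable M" "g \<in> borel_measurable M"
  shows "(\<integral>\<^sup>+\<omega>. (\<Prod>i<j. f (\<omega> i)) * g (\<omega> j) \<partial>PiM UNIV (\<lambda>_::nat. M))
       = (\<integral>\<^sup>+x. f x \<partial>M) ^ j * (\<integral>\<^sup>+x. g x \<partial>M)"
proof -
  define h where "h i = (if i < j then f else g)" for i
  have "(\<Prod>i<j. f (\<omega> i)) * g (\<omega> j) = (\<Prod>i<Suc j. h i (\<omega> i))" for \<omega>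
    by (simp add: h_def)
  moreover have "(\<Prod>i<Suc j. \<integral>\<^sup>+x. h i x \<partial>M) = (\<integral>\<^sup>+x. f x \<partial>M) ^ j * (\<integral>\<^sup>+x. g x \<partial>M)"
    by (simp add: h_def)
  ultimately show ?thesis
    using nn_integral_PiM_prod_components[OF M, of "{..<Suc j}" h] by (simp add: h_def)
qed

lemma AE_PiM_ex_component_in:
  assumes M: "prob_space M" and B: "B \<in> sets M" and pos: "emeasure M B > 0"
  shows "AE \<omega> in PiM UNIV (\<lambda>_::nat. M). \<exists>k. \<omega> k \<in> B"
proof -
  interpret M: prob_space M by fact
  define P where "P = PiM UNIV (\<lambda>_::nat. M)"
  interpret P: prob_space P unfolding P_def by (rule prob_space_PiM) (rule M)
  define A where "A = space M - B"
  define q where "q = measure M A"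
  have A[measurable]: "A \<in> sets M" using B by (simp add: A_def)
  have q: "0 \<le> q" "q < 1"
    using pos M.prob_compl[OF B] by (auto simp: q_def A_def M.emeasure_eq_measure)
  define N where "N n = {\<omega>\<in>space P. \<forall>k<n. \<omega> k \<in> A}" for n
  have N[measurable]: "N n \<in> sets P" for n unfolding N_def P_def by measurable
  have measure_N: "measure P (N n) = q ^ n" for n
  proof -
    have indicator_N: "indicator (N n) \<omega> = (\<Prod>k<n. indicator A (\<omega> k) :: ennreal)"
      if "\<omega> \<in> space P" for \<omega>
      using that by (induction n) (auto simp: N_def lessThan_Suc less_Suc_eq split: split_indicator)
    have "emeasure P (N n) = (\<integral>\<^sup>+\<omega>. indicator (N n) \<omega> \<partial>P)"
      by simp
    also have "\<dots> = (\<integral>\<^sup>+\<omega>. (\<Prod>k<n. indicator A (\<omega> k)) \<partial>P)"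
      using indicator_N by (rule nn_integral_cong)
    also have "\<dots> = ennreal (q ^ n)"
      unfolding P_def using q
      by (subst nn_integral_PiM_prod_components[OF M]) (auto simp: q_def M.emeasure_eq_measure ennreal_power)
    finally show ?thesis using q by (simp add: P.emeasure_eq_measure)
  qed
  have "measure P (\<Inter>n. N n) \<le> q ^ n" for n
    unfolding measure_N[symmetric] by (intro P.finite_measure_mono) auto
  moreover have "(\<lambda>n. q ^ n) \<longlonglongrightarrow> 0" using q by (intro LIMSEQ_power_zero) auto
  ultimately have "measure P (\<Inter>n. N n) \<le> 0"
    by (intro LIMSEQ_le_const[of "\<lambda>n. q ^ n"]) auto
  then have "emeasure P (\<Inter>n. N n) = 0"
    by (simp add: P.emeasure_eq_measure measure_nonneg antisym)
  moreover have "{\<omega>\<in>space P. \<not> (\<exists>k. \<omega> k \<in> B)} \<subseteq> (\<Inter>n. N n)"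
    by (auto simp: N_def A_def P_def space_PiM)
  ultimately show ?thesis
    unfolding P_def[symmetric] by (intro AE_I'[of "\<Inter>n. N n"]) auto
qed

lemma nn_integral_PiM_suminf_prefix_prod:
  fixes h :: "'a \<Rightarrow> ennreal"
  assumes M: "prob_space M" and A[measurable]: "A \<in> sets M" and h[measurable]: "h \<in> borel_measurable M"
    and pos: "emeasure M (space M - A) > 0"
  shows "(\<integral>\<^sup>+\<omega>. (\<Sum>j. (\<Prod>i<j. indicator A (\<omega> i)) * h (\<omega> j)) \<partial>PiM UNIV (\<lambda>_::nat. M))
       = (\<integral>\<^sup>+x. h x \<partial>M) / emeasure M (space M - A)"
proof -
  interpret M: prob_space M by fact
  define q where "q = measure M A"
  have q: "0 \<le> q" "q < 1" and compl: "emeasure M (space M - A) = ennreal (1 - q)"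
    using pos M.prob_compl[OF A] by (auto simp: q_def M.emeasure_eq_measure)
  have summand: "(\<integral>\<^sup>+\<omega>. (\<Prod>i<j. indicator A (\<omega> i)) * h (\<omega> j) \<partial>PiM UNIV (\<lambda>_::nat. M))
      = (\<integral>\<^sup>+x. h x \<partial>M) * ennreal (q ^ j)" for j
  proof -
    have "(\<integral>\<^sup>+x. indicator A x \<partial>M) = ennreal q"
      by (simp add: q_def M.emeasure_eq_measure)
    then show ?thesis
      using q nn_integral_PiM_prefix_prod[OF M borel_measurable_indicator[OF A] h, of j]
      by (simp add: ennreal_power mult.commute)
  qed
  have "(\<integral>\<^sup>+\<omega>. (\<Sum>j. (\<Prod>i<j. indicator A (\<omega> i)) * h (\<omega> j)) \<partial>PiM UNIV (\<lambda>_::nat. M))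
      = (\<Sum>j. (\<integral>\<^sup>+x. h x \<partial>M) * ennreal (q ^ j))"
    by (subst nn_integral_suminf) (measurable, simp add: summand)
  also have "\<dots> = (\<integral>\<^sup>+x. h x \<partial>M) * ennreal (1 / (1 - q))"
    using q by (simp add: ennreal_suminf_cmult suminf_ennreal_eq[OF _ geometric_sums] suminf_geometric)
  also have "\<dots> = (\<integral>\<^sup>+x. h x \<partial>M) / emeasure M (space M - A)"
    using q divide_ennreal[of 1 "1 - q"] by (simp add: compl divide_ennreal_def)
  finally show ?thesis .
qed

section \<open>The mean of the reset time\<close>

lemma reset_time_eq_suminf:
  "reset_time \<omega> = indicator {\<omega>. \<exists>k. fst (\<omega> k) \<le> snd (\<omega> k)} \<omega> *
     (\<Sum>j. (\<Prod>i<j. indicator {p. snd p < fst p} (\<omega> i)) * min (fst (\<omega> j)) (snd (\<omega> j)))"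
    (is "_ = _ * (\<Sum>j. ?t j)")
proof (cases "\<exists>k. fst (\<omega> k) \<le> snd (\<omega> k)")
  case False
  then show ?thesis by (simp add: reset_time_def)
next
  case True
  define K where "K = (LEAST k. fst (\<omega> k) \<le> snd (\<omega> k))"
  have K: "fst (\<omega> K) \<le> snd (\<omega> K)" unfolding K_def using True by (rule LeastI_ex)
  have before_K: "snd (\<omega> i) < fst (\<omega> i)" if "i < K" for i
    using not_less_Least[OF that[unfolded K_def]] by (simp add: not_le)
  have "?t j = 0" if "K < j" for j
    using that K by (auto intro!: prod_zero bexI[of _ K] simp: indicator_def not_less)
  then have "(\<Sum>j. ?t j) = (\<Sum>j<Suc K. ?t j)"
    by (intro suminf_finite) auto
  also have "\<dots> = (\<Sum>j<K. ?t j) + ?t K"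
    by simp
  also have "\<dots> = (\<Sum>j<K. snd (\<omega> j)) + fst (\<omega> K)"
  proof -
    have "(\<Prod>i<j. indicator {p. snd p < fst p} (\<omega> i)) = (1::ennreal)" if "j \<le> K" for j
      using that before_K by (intro prod.neutral) auto
    moreover have "min (fst (\<omega> j)) (snd (\<omega> j)) = snd (\<omega> j)" if "j < K" for j
      using before_K[OF that] by simp
    ultimately show ?thesis
      using K by (auto intro!: sum.cong)
  qed
  finally show ?thesis using True by (simp add: reset_time_def K_def Let_def)
qed

lemma mean_reset_law_of:
  assumes T: "is_law T" and R: "is_law R"
    and pos: "emeasure (T \<Otimes>\<^sub>M R) {p. fst p \<le> snd p} > 0"
  shows "mean (reset_law_of T R)
    = (\<integral>\<^sup>+ p. min (fst p) (snd p) \<partial>(T \<Otimes>\<^sub>M R)) / emeasure (T \<Otimes>\<^sub>M R) {p. fst p \<le> snd p}"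
proof -
  define M where "M = T \<Otimes>\<^sub>M R"
  interpret T: prob_space T using T by (rule is_lawD)
  interpret R: prob_space R using R by (rule is_lawD)
  interpret TR: pair_prob_space T R by unfold_locales
  interpret M: prob_space M unfolding M_def by (rule TR.P.prob_space_axioms)
  have sets_M[measurable_cong]: "sets M = sets (borel \<Otimes>\<^sub>M borel)"
    unfolding M_def by (intro sets_pair_measure_cong is_lawD T R)
  have space_M: "space M = UNIV"
    using sets_eq_imp_space_eq[OF sets_M] by (simp add: space_pair_measure)
  define A where "A = {p::ennreal \<times> ennreal. snd p < fst p}"
  define B where "B = {p::ennreal \<times> ennreal. fst p \<le> snd p}"
  have "{p \<in> space (borel \<Otimes>\<^sub>M borel). snd p < fst (p::ennreal \<times> ennreal)} \<in> sets (borel \<Otimes>\<^sub>M borel)"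
    "{p \<in> space (borel \<Otimes>\<^sub>M borel). fst p \<le> snd (p::ennreal \<times> ennreal)} \<in> sets (borel \<Otimes>\<^sub>M borel)"
    by measurable
  then have A_meas[measurable]: "A \<in> sets M" and B_meas[measurable]: "B \<in> sets M"
    unfolding A_def B_def sets_M by (simp_all add: space_pair_measure)
  have B_eq: "B = space M - A"
    unfolding A_def B_def space_M by (auto simp: not_less)
  have min_meas[measurable]: "(\<lambda>p::ennreal \<times> ennreal. min (fst p) (snd p)) \<in> borel_measurable M"
    by (subst measurable_cong_sets[OF sets_M refl]) measurable
  define P where "P = PiM UNIV (\<lambda>_::nat. M)"
  define E where "E = {\<omega> :: nat \<Rightarrow> ennreal \<times> ennreal. \<exists>k. \<omega> k \<in> B}"
  have "E = (\<Union>k. {\<omega>\<in>space P. \<omega> k \<in> B})"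
    by (auto simp: E_def P_def space_PiM space_M)
  also have "\<dots> \<in> sets P"
    unfolding P_def by measurable
  finally have [measurable]: "E \<in> sets P" .
  have reset_time_eq: "reset_time
      = (\<lambda>\<omega>. indicator E \<omega> * (\<Sum>j. (\<Prod>i<j. indicator A (\<omega> i)) * min (fst (\<omega> j)) (snd (\<omega> j))))"
    by (simp add: fun_eq_iff reset_time_eq_suminf E_def A_def B_def)
  have [measurable]: "(\<lambda>\<omega>. \<Sum>j. (\<Prod>i<j. indicator A (\<omega> i)) * min (fst (\<omega> j)) (snd (\<omega> j)))
      \<in> borel_measurable P"
    unfolding P_def by measurable
  then have reset_time_meas: "reset_time \<in> borel_measurable P"
    unfolding reset_time_eq by measurable
  have AE_E: "AE \<omega> in P. \<omega> \<in> E"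
    using AE_PiM_ex_component_in[OF M.prob_space_axioms B_meas] pos
    unfolding P_def E_def M_def[symmetric] B_def by simp
  have "mean (reset_law_of T R) = (\<integral>\<^sup>+\<omega>. reset_time \<omega> \<partial>P)"
    unfolding mean_def reset_law_of_def reset_space_def M_def[symmetric] P_def[symmetric]
    by (subst nn_integral_distr[OF reset_time_meas]) auto
  also have "\<dots> = (\<integral>\<^sup>+\<omega>. (\<Sum>j. (\<Prod>i<j. indicator A (\<omega> i)) * min (fst (\<omega> j)) (snd (\<omega> j))) \<partial>P)"
    using AE_E by (intro nn_integral_cong_AE) (auto simp: reset_time_eq)
  also have "\<dots> = (\<integral>\<^sup>+ p. min (fst p) (snd p) \<partial>M) / emeasure M B"
    unfolding P_def B_eq
    by (rule nn_integral_PiM_suminf_prefix_prod[OF M.prob_space_axioms A_meas min_meas])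
      (use pos in \<open>simp add: M_def[symmetric] B_def[symmetric] B_eq\<close>)
  finally show ?thesis
    by (simp only: M_def B_def)
qed

section \<open>The integrated survival function\<close>

lemma nn_integral_indicator_ennreal_less:
  "(\<integral>\<^sup>+u. indicator {u::real. 0 \<le> u \<and> ennreal u < m} u \<partial>lborel) = m"
proof (cases m rule: ennreal_cases)
  case (real x)
  then have "{u. 0 \<le> u \<and> ennreal u < m} = {0..<x}"
    using ennreal_less_iff by auto
  then show ?thesis
    using real by simp
next
  case top
  then have "{u::real. 0 \<le> u \<and> ennreal u < m} = {0..}"
    by auto
  moreover have "emeasure lborel {0::real..} = top"
  proof (rule ccontr)
    assume "emeasure lborel {0::real..} \<noteq> top"
    then obtain n where n: "emeasure lborel {0::real..} < of_nat n"
      using ennreal_Ex_less_of_nat top.not_eq_extremum by blast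
    have "of_nat n = emeasure lborel {0..<real n}"
      by (simp add: ennreal_of_nat_eq_real_of_nat)
    also have "\<dots> \<le> emeasure lborel {0::real..}"
      by (intro emeasure_mono) auto
    finally show False
      using n by simp
  qed
  ultimately show ?thesis
    using top by simp
qed

lemma intFbar_eq_nn_integral_min:
  assumes "is_law T"
  shows "intFbar T r = (\<integral>\<^sup>+t. min t r \<partial>T)"
proof -
  interpret T: prob_space T using assms by (rule is_lawD)
  interpret TL: pair_sigma_finite T lborel
    by (intro pair_sigma_finite.intro T.sigma_finite_measure_axioms lborel.sigma_finite_measure_axioms)
  have sets_T: "sets T = sets borel" using assms by (rule is_lawD)
  define h where "h t u = (indicator {u::real. 0 \<le> u \<and> ennreal u < r \<and> ennreal u < t} u :: ennreal)" for t u
  have sets_TL[measurable_cong]: "sets (T \<Otimes>\<^sub>M lborel) = sets (borel \<Otimes>\<^sub>M borel)"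
    by (intro sets_pair_measure_cong sets_T) simp
  have h_meas: "(\<lambda>(t, u). h t u) \<in> borel_measurable (T \<Otimes>\<^sub>M lborel)"
    unfolding h_def by (subst measurable_cong_sets[OF sets_TL refl]) measurable
  have "intFbar T r = (\<integral>\<^sup>+u. \<integral>\<^sup>+t. h t u \<partial>T \<partial>lborel)"
    unfolding intFbar_def Fbar_def
  proof (intro nn_integral_cong)
    fix u :: real
    have "ennreal (measure T {ennreal u<..}) = (\<integral>\<^sup>+t. indicator {ennreal u<..} t \<partial>T)"
      using sets_T by (simp add: T.emeasure_eq_measure)
    also have "indicator {u. 0 \<le> u \<and> ennreal u < r} u * \<dots>
        = (\<integral>\<^sup>+t. indicator {u. 0 \<le> u \<and> ennreal u < r} u * indicator {ennreal u<..} t \<partial>T)"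
      using sets_T by (subst nn_integral_cmult) auto
    also have "\<dots> = (\<integral>\<^sup>+t. h t u \<partial>T)"
      by (intro nn_integral_cong) (auto simp: h_def indicator_def)
    finally show "indicator {u. 0 \<le> u \<and> ennreal u < r} u * ennreal (measure T {ennreal u<..})
        = (\<integral>\<^sup>+t. h t u \<partial>T)" .
  qed
  also have "\<dots> = (\<integral>\<^sup>+t. \<integral>\<^sup>+u. h t u \<partial>lborel \<partial>T)"
    by (rule TL.Fubini'[OF h_meas])
  also have "\<dots> = (\<integral>\<^sup>+t. min t r \<partial>T)"
  proof (intro nn_integral_cong)
    fix t
    have "h t u = indicator {u. 0 \<le> u \<and> ennreal u < min t r} u" for u
      by (auto simp: h_def indicator_def)
    then show "(\<integral>\<^sup>+u. h t u \<partial>lborel) = min t r"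
      using nn_integral_indicator_ennreal_less[of "min t r"] by simp
  qed
  finally show ?thesis .
qed

lemma Fdist_eq_emeasure_atMost:
  assumes "is_law T"
  shows "ennreal (Fdist T r) = emeasure T {..r}"
proof -
  interpret T: prob_space T using assms by (rule is_lawD)
  have "{r<..} \<in> sets T" "space T - {r<..} = {..r}"
    using is_lawD[OF assms] by auto
  then show ?thesis
    unfolding Fdist_def Fbar_def using T.prob_compl[of "{r<..}"] by (simp add: T.emeasure_eq_measure)
qed

lemma borel_measurable_intFbar:
  assumes "is_law T"
  shows "intFbar T \<in> borel_measurable borel"
proof -
  interpret T: prob_space T using assms by (rule is_lawD)
  have [measurable_cong]: "sets (borel \<Otimes>\<^sub>M T) = sets (borel \<Otimes>\<^sub>M borel)"
    using assms by (intro sets_pair_measure_cong is_lawD) simp_all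
  have "(\<lambda>(r, t). min t (r::ennreal)) \<in> borel_measurable (borel \<Otimes>\<^sub>M T)"
    by measurable
  then have "(\<lambda>r. \<integral>\<^sup>+t. min t r \<partial>T) \<in> borel_measurable borel"
    by (rule T.borel_measurable_nn_integral)
  then show ?thesis
    by (simp add: intFbar_eq_nn_integral_min[OF assms, abs_def])
qed

lemma borel_measurable_Fdist:
  assumes "is_law T"
  shows "(\<lambda>r. ennreal (Fdist T r)) \<in> borel_measurable borel"
proof -
  interpret T: prob_space T using assms by (rule is_lawD)
  have [measurable_cong]: "sets (borel \<Otimes>\<^sub>M T) = sets (borel \<Otimes>\<^sub>M borel)"
    using assms by (intro sets_pair_measure_cong is_lawD) simp_all
  have "(\<lambda>(r, t). indicator {..r::ennreal} t :: ennreal) \<in> borel_measurable (borel \<Otimes>\<^sub>M T)"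
    by (simp add: indicator_def) measurable
  then have "(\<lambda>r. \<integral>\<^sup>+t. indicator {..r} t \<partial>T) \<in> borel_measurable borel"
    by (rule T.borel_measurable_nn_integral)
  moreover have "(\<integral>\<^sup>+t. indicator {..r} t \<partial>T) = ennreal (Fdist T r)" for r
    using is_lawD[OF assms] by (simp add: Fdist_eq_emeasure_atMost[OF assms])
  ultimately show ?thesis
    by simp
qed

lemma nn_integral_min_pair_measure:
  assumes T: "is_law T" and R: "is_law R"
  shows "(\<integral>\<^sup>+ p. min (fst p) (snd p) \<partial>(T \<Otimes>\<^sub>M R)) = (\<integral>\<^sup>+ r. intFbar T r \<partial>R)"
proof -
  interpret T: prob_space T using T by (rule is_lawD)
  interpret R: prob_space R using R by (rule is_lawD)
  interpret TR: pair_prob_space T R by unfold_locales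
  have [measurable_cong]: "sets (T \<Otimes>\<^sub>M R) = sets (borel \<Otimes>\<^sub>M borel)"
    by (intro sets_pair_measure_cong is_lawD T R)
  have "(\<lambda>p::ennreal \<times> ennreal. min (fst p) (snd p)) \<in> borel_measurable (T \<Otimes>\<^sub>M R)"
    by measurable
  then show ?thesis
    by (simp add: TR.nn_integral_snd[symmetric] intFbar_eq_nn_integral_min[OF T])
qed

lemma emeasure_pair_measure_fst_le:
  assumes T: "is_law T" and R: "is_law R"
  shows "emeasure (T \<Otimes>\<^sub>M R) {p. fst p \<le> snd p} = (\<integral>\<^sup>+ r. ennreal (Fdist T r) \<partial>R)"
proof -
  interpret T: prob_space T using T by (rule is_lawD)
  interpret R: prob_space R using R by (rule is_lawD)
  interpret TR: pair_prob_space T R by unfold_locales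
  have sets_TR: "sets (T \<Otimes>\<^sub>M R) = sets (borel \<Otimes>\<^sub>M borel)"
    by (intro sets_pair_measure_cong is_lawD T R)
  have "{p \<in> space (borel \<Otimes>\<^sub>M borel). fst p \<le> snd (p::ennreal \<times> ennreal)} \<in> sets (borel \<Otimes>\<^sub>M borel)"
    by measurable
  then have "{p::ennreal \<times> ennreal. fst p \<le> snd p} \<in> sets (T \<Otimes>\<^sub>M R)"
    unfolding sets_TR by (simp add: space_pair_measure)
  then show ?thesis
    by (simp add: TR.emeasure_pair_measure_alt2 Fdist_eq_emeasure_atMost[OF T] atMost_def)
qed

lemma Fdist_nonneg:
  assumes "is_law T"
  shows "0 \<le> Fdist T r"
  using prob_space.prob_le_1[OF is_lawD(1)[OF assms]] by (simp add: Fdist_def Fbar_def)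

text \<open>The support condition on the law of T is used only here.\<close>

lemma Fdist_pos:
  assumes "standing_T T" and "0 < r"
  shows "0 < Fdist T r"
proof -
  have T: "is_law T" and inf_supp: "Inf (measure_support T) = 0"
    using assms(1) by (auto simp: standing_T_def)
  have "Fdist T r \<noteq> 0"
  proof
    assume "Fdist T r = 0"
    then have "emeasure T {..r} = 0"
      using Fdist_eq_emeasure_atMost[OF T, of r] by simp
    moreover have "emeasure T {..<r} \<le> emeasure T {..r}"
      using is_lawD[OF T] by (intro emeasure_mono) auto
    ultimately have null_below: "emeasure T {..<r} = 0"
      by simp
    have "r \<le> x" if "x \<in> measure_support T" for x
    proof (rule ccontr)
      assume "\<not> r \<le> x"
      with that have "emeasure T {..<r} > 0"
        unfolding measure_support_def by auto
      with null_below show False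
        by simp
    qed
    then have "r \<le> Inf (measure_support T)"
      by (rule Inf_greatest)
    with inf_supp assms(2) show False
      by simp
  qed
  with Fdist_nonneg[OF T] show ?thesis
    by (simp add: less_le)
qed

lemma intFbar_zero: "intFbar T 0 = 0"
  by (simp add: intFbar_def)

lemma intFbar_top:
  assumes "is_law T"
  shows "intFbar T top = mean T"
  by (simp add: intFbar_eq_nn_integral_min[OF assms] mean_def)

lemma intFbar_le:
  assumes "is_law T" and "0 \<le> x"
  shows "intFbar T (ennreal x) \<le> ennreal x"
proof -
  interpret T: prob_space T using assms(1) by (rule is_lawD)
  have "intFbar T (ennreal x) \<le> (\<integral>\<^sup>+u. indicator {u::real. 0 \<le> u \<and> ennreal u < ennreal x} u \<partial>lborel)"
    unfolding intFbar_def by (intro nn_integral_mono) (auto simp: indicator_def Fbar_def)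
  then show ?thesis
    by (simp add: nn_integral_indicator_ennreal_less)
qed

lemma SUP_intFbar_of_nat:
  assumes "is_law T"
  shows "(SUP n. intFbar T (of_nat n)) = mean T"
proof -
  have "(SUP n. intFbar T (of_nat n)) = (SUP n. \<integral>\<^sup>+t. min t (of_nat n) \<partial>T)"
    by (simp add: intFbar_eq_nn_integral_min[OF assms])
  also have "\<dots> = (\<integral>\<^sup>+t. (SUP n. min t (of_nat n)) \<partial>T)"
  proof (rule nn_integral_monotone_convergence_SUP[symmetric])
    show "incseq (\<lambda>n t. min t (of_nat n :: ennreal))"
      by (intro monoI le_funI min.mono) auto
    show "(\<lambda>t. min t (of_nat n)) \<in> borel_measurable T" for n
      by (subst measurable_cong_sets[OF is_lawD(2)[OF assms] refl]) measurable
  qed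
  also have "\<dots> = mean T"
    by (simp add: mean_def complete_linorder_inf_min[symmetric] inf_SUP[symmetric]
        ennreal_SUP_of_nat_eq_top)
  finally show ?thesis .
qed

lemma Fdist_le_1: "Fdist T r \<le> 1"
  by (simp add: Fdist_def Fbar_def)

lemma Fdist_top: "Fdist T top = 1"
proof -
  have "{top::ennreal<..} = {}"
    by auto
  then show ?thesis
    by (simp add: Fdist_def Fbar_def)
qed

lemma Fdist_mono:
  assumes "is_law T" and "r \<le> r'"
  shows "Fdist T r \<le> Fdist T r'"
  using emeasure_mono[of "{..r}" "{..r'}" T] assms Fdist_nonneg[OF assms(1)]
  by (simp add: Fdist_eq_emeasure_atMost[OF assms(1), symmetric] is_lawD)

lemma SUP_Fdist_of_nat:
  assumes "is_law T" and "emeasure T {top} = 0"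
  shows "(SUP n. ennreal (Fdist T (of_nat n))) = 1"
proof -
  interpret T: prob_space T using assms(1) by (rule is_lawD)
  have sets_T: "sets T = sets borel" using assms(1) by (rule is_lawD)
  have "(SUP n. ennreal (Fdist T (of_nat n))) = emeasure T (\<Union>n. {..of_nat n})"
    unfolding Fdist_eq_emeasure_atMost[OF assms(1)]
    using sets_T by (intro SUP_emeasure_incseq) (auto intro!: monoI simp: image_subset_iff)
  also have "(\<Union>n. {..of_nat n}) = space T - {top}"
  proof (intro set_eqI iffI)
    fix x :: ennreal
    assume "x \<in> (\<Union>n. {..of_nat n})"
    then obtain n where "x \<le> of_nat n"
      by auto
    then have "x < top"
      using of_nat_less_top by (rule le_less_trans)
    then show "x \<in> space T - {top}"
      using is_lawD(3)[OF assms(1)] by simp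
  next
    fix x :: ennreal
    assume "x \<in> space T - {top}"
    then obtain n where "x < of_nat n"
      using ennreal_Ex_less_of_nat top.not_eq_extremum by blast
    then show "x \<in> (\<Union>n. {..of_nat n})"
      by (auto intro: less_imp_le)
  qed
  also have "emeasure T \<dots> = 1"
    using emeasure_compl[of "{top}" T] sets_T assms(2) T.emeasure_space_1 by simp
  finally show ?thesis .
qed

lemma mean_eq_top_if_emeasure_top:
  assumes "is_law T" and "emeasure T {top} \<noteq> 0"
  shows "mean T = top"
proof -
  have "top * emeasure T {top} \<le> mean T"
    unfolding mean_def using is_lawD(2)[OF assms(1)]
    by (subst nn_integral_cmult_indicator[symmetric])
      (auto intro!: nn_integral_mono simp: indicator_def)
  with assms(2) show ?thesis
    by (simp add: top_unique)
qed

lemma ratio_mult_Fdist: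
  assumes "standing_T T" and "0 < x"
  shows "ratio T x * ennreal (Fdist T (ennreal x)) = intFbar T (ennreal x)"
  using Fdist_pos[OF assms(1), of "ennreal x"] assms(2)
  by (simp add: ratio_def ennreal_divide_times ennreal_divide_self)

section \<open>Comparison with the extreme ratios\<close>

lemma INF_ratio_mult_Fdist_le_intFbar_ennreal:
  assumes T: "standing_T T" and "0 \<le> x"
  shows "(INF t\<in>{0<..}. ratio T t) * ennreal (Fdist T (ennreal x)) \<le> intFbar T (ennreal x)"
proof -
  define I where "I = (INF t\<in>{0::real<..}. ratio T t)"
  have law: "is_law T"
    using T by (simp add: standing_T_def)
  have pos: "I * ennreal (Fdist T (ennreal y)) \<le> intFbar T (ennreal y)" if "0 < y" for y
  proof -
    have "I \<le> ratio T y"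
      unfolding I_def using that by (intro INF_lower) auto
    then show ?thesis
      using ratio_mult_Fdist[OF T that] by (metis mult_right_mono zero_le)
  qed
  show ?thesis
  proof (cases "x = 0")
    case True
    \<comment> \<open>the ratio is not defined at 0, but \<open>I F(0) \<le> I F(e) \<le> intFbar T e \<le> e\<close> for all \<open>e > 0\<close>\<close>
    have "I * ennreal (Fdist T 0) \<le> 0 + ennreal e" if "0 < e" for e
    proof -
      have "I * ennreal (Fdist T 0) \<le> I * ennreal (Fdist T (ennreal e))"
        using Fdist_mono[OF law, of 0 "ennreal e"] by (intro mult_left_mono ennreal_leI) auto
      also have "\<dots> \<le> intFbar T (ennreal e)"
        by (rule pos[OF that])
      also have "\<dots> \<le> ennreal e"
        using intFbar_le[OF law] that by simp
      finally show ?thesis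
        by simp
    qed
    then have "I * ennreal (Fdist T 0) \<le> 0"
      by (rule ennreal_le_epsilon) simp
    then show ?thesis
      using True by (simp add: I_def[symmetric] intFbar_zero)
  next
    case False
    then show ?thesis
      using pos assms(2) by (simp add: I_def)
  qed
qed

text \<open>An atom of T at \<open>\<infinity>\<close> forces \<open>mean T = \<infinity>\<close>; otherwise \<open>Fdist T n \<rightarrow> 1\<close> and
  \<open>intFbar T n \<rightarrow> mean T\<close>.\<close>

lemma INF_ratio_le_mean:
  assumes T: "standing_T T"
  shows "(INF t\<in>{0<..}. ratio T t) \<le> mean T"
proof (cases "emeasure T {top} = 0")
  case True
  define I where "I = (INF t\<in>{0::real<..}. ratio T t)"
  have law: "is_law T"
    using T by (simp add: standing_T_def)
  have "I = I * (SUP n. ennreal (Fdist T (of_nat n)))"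
    using SUP_Fdist_of_nat[OF law True] by simp
  also have "\<dots> = (SUP n. I * ennreal (Fdist T (ennreal (real n))))"
    by (simp add: SUP_mult_left_ennreal ennreal_of_nat_eq_real_of_nat)
  also have "\<dots> \<le> (SUP n. intFbar T (ennreal (real n)))"
  proof (rule SUP_mono)
    fix n
    show "\<exists>m\<in>UNIV. I * ennreal (Fdist T (ennreal (real n))) \<le> intFbar T (ennreal (real m))"
      using INF_ratio_mult_Fdist_le_intFbar_ennreal[OF T, of "real n"] unfolding I_def by auto
  qed
  also have "\<dots> = mean T"
    using SUP_intFbar_of_nat[OF law] by (simp add: ennreal_of_nat_eq_real_of_nat)
  finally show ?thesis
    unfolding I_def .
next
  case False
  then show ?thesis
    using T by (simp add: mean_eq_top_if_emeasure_top standing_T_def)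
qed

lemma INF_ratio_mult_Fdist_le_intFbar:
  assumes "standing_T T"
  shows "(INF t\<in>{0<..}. ratio T t) * ennreal (Fdist T r) \<le> intFbar T r"
proof (cases r rule: ennreal_cases)
  case (real x)
  then show ?thesis
    using INF_ratio_mult_Fdist_le_intFbar_ennreal[OF assms] by simp
next
  case top
  then show ?thesis
    using INF_ratio_le_mean[OF assms] assms by (simp add: Fdist_top intFbar_top standing_T_def)
qed

lemma intFbar_le_SUP_ratio_mult_Fdist_ennreal:
  assumes T: "standing_T T" and "0 \<le> x"
  shows "intFbar T (ennreal x) \<le> (SUP t\<in>{0<..}. ratio T t) * ennreal (Fdist T (ennreal x))"
proof (cases "x = 0")
  case False
  with assms(2) have "0 < x"
    by simp
  then have "ratio T x \<le> (SUP t\<in>{0<..}. ratio T t)"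
    by (intro SUP_upper) auto
  then show ?thesis
    using ratio_mult_Fdist[OF T \<open>0 < x\<close>] by (metis mult_right_mono zero_le)
qed (simp add: intFbar_zero)

lemma mean_le_SUP_ratio:
  assumes T: "standing_T T"
  shows "mean T \<le> (SUP t\<in>{0<..}. ratio T t)"
proof -
  have law: "is_law T"
    using T by (simp add: standing_T_def)
  have "intFbar T (ennreal x) \<le> (SUP t\<in>{0<..}. ratio T t)" if "0 \<le> x" for x
    using intFbar_le_SUP_ratio_mult_Fdist_ennreal[OF T that] Fdist_le_1[of T "ennreal x"]
    by (metis ennreal_le_1 mult.right_neutral mult_left_mono order.trans zero_le)
  then show ?thesis
    unfolding SUP_intFbar_of_nat[OF law, symmetric]
    by (intro SUP_least) (simp add: ennreal_of_nat_eq_real_of_nat)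
qed

lemma intFbar_le_SUP_ratio_mult_Fdist:
  assumes "standing_T T"
  shows "intFbar T r \<le> (SUP t\<in>{0<..}. ratio T t) * ennreal (Fdist T r)"
proof (cases r rule: ennreal_cases)
  case (real x)
  then show ?thesis
    using intFbar_le_SUP_ratio_mult_Fdist_ennreal[OF assms] by simp
next
  case top
  then show ?thesis
    using mean_le_SUP_ratio[OF assms] assms by (simp add: Fdist_top intFbar_top standing_T_def)
qed

section \<open>Averaging over the reset law\<close>

lemma nn_integral_divide_ge:
  fixes f g :: "'a \<Rightarrow> ennreal"
  assumes f: "f \<in> borel_measurable M"
    and nonzero: "(\<integral>\<^sup>+x. f x \<partial>M) \<noteq> 0" and finite: "(\<integral>\<^sup>+x. f x \<partial>M) \<noteq> top"
    and le: "\<And>x. x \<in> space M \<Longrightarrow> c * f x \<le> g x"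
  shows "c \<le> (\<integral>\<^sup>+x. g x \<partial>M) / (\<integral>\<^sup>+x. f x \<partial>M)"
proof -
  have "c * (\<integral>\<^sup>+x. f x \<partial>M) = (\<integral>\<^sup>+x. c * f x \<partial>M)"
    using f by (rule nn_integral_cmult[symmetric])
  also have "\<dots> \<le> (\<integral>\<^sup>+x. g x \<partial>M)"
    using le by (rule nn_integral_mono)
  finally have "c * (\<integral>\<^sup>+x. f x \<partial>M) / (\<integral>\<^sup>+x. f x \<partial>M) \<le> (\<integral>\<^sup>+x. g x \<partial>M) / (\<integral>\<^sup>+x. f x \<partial>M)"
    by (rule divide_right_mono_ennreal)
  then show ?thesis
    using nonzero finite by (simp add: ennreal_mult_divide_eq)
qed

lemma nn_integral_divide_le:
  fixes f g :: "'a \<Rightarrow> ennreal"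
  assumes f: "f \<in> borel_measurable M" and nonzero: "(\<integral>\<^sup>+x. f x \<partial>M) \<noteq> 0"
    and le: "\<And>x. x \<in> space M \<Longrightarrow> g x \<le> c * f x"
  shows "(\<integral>\<^sup>+x. g x \<partial>M) / (\<integral>\<^sup>+x. f x \<partial>M) \<le> c"
proof (rule divide_le_posI_ennreal)
  have "(\<integral>\<^sup>+x. g x \<partial>M) \<le> (\<integral>\<^sup>+x. c * f x \<partial>M)"
    using le by (rule nn_integral_mono)
  also have "\<dots> = c * (\<integral>\<^sup>+x. f x \<partial>M)"
    using f by (rule nn_integral_cmult)
  finally show "(\<integral>\<^sup>+x. g x \<partial>M) \<le> (\<integral>\<^sup>+x. f x \<partial>M) * c"
    by (simp add: mult.commute)
qed (use nonzero in \<open>simp add: zero_less_iff_neq_zero\<close>)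

lemma nn_integral_Fdist_nonzero:
  assumes T: "standing_T T" and R: "reset_law R"
  shows "(\<integral>\<^sup>+ r. ennreal (Fdist T r) \<partial>R) \<noteq> 0"
proof
  have law_T: "is_law T" and law_R: "is_law R" and R_pos: "emeasure R {0<..} > 0"
    using T R by (auto simp: standing_T_def reset_law_def)
  have meas: "(\<lambda>r. ennreal (Fdist T r)) \<in> borel_measurable R"
    using borel_measurable_Fdist[OF law_T] by (simp add: measurable_cong_sets[OF is_lawD(2)[OF law_R] refl])
  assume "(\<integral>\<^sup>+ r. ennreal (Fdist T r) \<partial>R) = 0"
  then have "AE r in R. ennreal (Fdist T r) = 0"
    using nn_integral_0_iff_AE[OF meas] by simp
  then have "AE r in R. r \<notin> {0<..}"
    by eventually_elim (use Fdist_pos[OF T] in \<open>force\<close>)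
  then have "emeasure R {0<..} = 0"
    using is_lawD[OF law_R] by (subst AE_iff_measurable[symmetric, of "{0<..}" R]) (auto simp: zero_less_iff_neq_zero)
  with R_pos show False
    by simp
qed

lemma mean_reset_law_of_eq_integrals:
  assumes T: "standing_T T" and R: "reset_law R"
  shows "mean (reset_law_of T R) = (\<integral>\<^sup>+ r. intFbar T r \<partial>R) / (\<integral>\<^sup>+ r. ennreal (Fdist T r) \<partial>R)"
    and "mean (reset_law_of T R)
      = (\<integral>\<^sup>+ p. min (fst p) (snd p) \<partial>(T \<Otimes>\<^sub>M R)) / emeasure (T \<Otimes>\<^sub>M R) {p. fst p \<le> snd p}"
proof -
  have law_T: "is_law T" and law_R: "is_law R"
    using T R by (auto simp: standing_T_def reset_law_def)
  have "emeasure (T \<Otimes>\<^sub>M R) {p. fst p \<le> snd p} > 0"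
    using nn_integral_Fdist_nonzero[OF T R]
    by (simp add: emeasure_pair_measure_fst_le[OF law_T law_R] zero_less_iff_neq_zero)
  then show "mean (reset_law_of T R)
      = (\<integral>\<^sup>+ p. min (fst p) (snd p) \<partial>(T \<Otimes>\<^sub>M R)) / emeasure (T \<Otimes>\<^sub>M R) {p. fst p \<le> snd p}"
    by (rule mean_reset_law_of[OF law_T law_R])
  then show "mean (reset_law_of T R) = (\<integral>\<^sup>+ r. intFbar T r \<partial>R) / (\<integral>\<^sup>+ r. ennreal (Fdist T r) \<partial>R)"
    by (simp add: nn_integral_min_pair_measure[OF law_T law_R] emeasure_pair_measure_fst_le[OF law_T law_R])
qed

lemma mean_reset_law_of_bounds:
  assumes T: "standing_T T" and R: "reset_law R"
  shows "(INF t\<in>{0<..}. ratio T t) \<le> mean (reset_law_of T R)"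
    and "mean (reset_law_of T R) \<le> (SUP t\<in>{0<..}. ratio T t)"
proof -
  have law_T: "is_law T" and law_R: "is_law R"
    using T R by (auto simp: standing_T_def reset_law_def)
  interpret R: prob_space R using law_R by (rule is_lawD)
  have meas: "(\<lambda>r. ennreal (Fdist T r)) \<in> borel_measurable R"
    using borel_measurable_Fdist[OF law_T] by (simp add: measurable_cong_sets[OF is_lawD(2)[OF law_R] refl])
  have "(\<integral>\<^sup>+ r. ennreal (Fdist T r) \<partial>R) \<le> (\<integral>\<^sup>+ r. 1 \<partial>R)"
    by (intro nn_integral_mono) (simp add: Fdist_le_1)
  then have finite: "(\<integral>\<^sup>+ r. ennreal (Fdist T r) \<partial>R) \<noteq> top"
    by (auto simp: R.emeasure_space_1 top_unique)
  show "(INF t\<in>{0<..}. ratio T t) \<le> mean (reset_law_of T R)"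
    unfolding mean_reset_law_of_eq_integrals(1)[OF T R]
    by (rule nn_integral_divide_ge[OF meas nn_integral_Fdist_nonzero[OF T R] finite
          INF_ratio_mult_Fdist_le_intFbar[OF T]])
  show "mean (reset_law_of T R) \<le> (SUP t\<in>{0<..}. ratio T t)"
    unfolding mean_reset_law_of_eq_integrals(1)[OF T R]
    by (rule nn_integral_divide_le[OF meas nn_integral_Fdist_nonzero[OF T R]
          intFbar_le_SUP_ratio_mult_Fdist[OF T]])
qed

lemma reset_law_return:
  assumes "0 < x"
  shows "reset_law (return borel (ennreal x))"
  using assms by (simp add: reset_law_def is_law_def prob_space_return emeasure_return indicator_def)

lemma mean_reset_law_of_return:
  assumes T: "standing_T T" and "0 < x"
  shows "mean (reset_law_of T (return borel (ennreal x))) = ratio T x"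
proof -
  have law_T: "is_law T"
    using T by (simp add: standing_T_def)
  show ?thesis
    using borel_measurable_intFbar[OF law_T] borel_measurable_Fdist[OF law_T]
    by (simp add: mean_reset_law_of_eq_integrals(1)[OF T reset_law_return[OF assms(2)]]
        nn_integral_return ratio_def)
qed

lemma SUP_mean_reset_law_of:
  assumes T: "standing_T T"
  shows "(SUP R\<in>{R. reset_law R}. mean (reset_law_of T R)) = (SUP t\<in>{0<..}. ratio T t)"
proof (rule antisym)
  show "(SUP R\<in>{R. reset_law R}. mean (reset_law_of T R)) \<le> (SUP t\<in>{0<..}. ratio T t)"
    by (rule SUP_least) (simp add: mean_reset_law_of_bounds(2)[OF T])
  show "(SUP t\<in>{0<..}. ratio T t) \<le> (SUP R\<in>{R. reset_law R}. mean (reset_law_of T R))"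
    by (rule SUP_least, subst mean_reset_law_of_return[OF T, symmetric])
      (auto intro!: SUP_upper reset_law_return)
qed

lemma INF_mean_reset_law_of:
  assumes T: "standing_T T"
  shows "(INF R\<in>{R. reset_law R}. mean (reset_law_of T R)) = (INF t\<in>{0<..}. ratio T t)"
proof (rule antisym)
  show "(INF t\<in>{0<..}. ratio T t) \<le> (INF R\<in>{R. reset_law R}. mean (reset_law_of T R))"
    by (rule INF_greatest) (simp add: mean_reset_law_of_bounds(1)[OF T])
  show "(INF R\<in>{R. reset_law R}. mean (reset_law_of T R)) \<le> (INF t\<in>{0<..}. ratio T t)"
    by (rule INF_greatest, subst mean_reset_law_of_return[OF T, symmetric])
      (auto intro!: INF_lower reset_law_return)
qed

text \<open>In \<open>[0,\<infinity>]\<close> the argument does not need the hypothesis \<open>m0\<close>.\<close>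

theorem mainTheorem6:
  fixes T :: "ennreal measure"
  assumes hT: "standing_T T"
    and m0: "mean T < \<infinity>"
  shows "(\<forall>R. reset_law R \<longrightarrow>
            mean (reset_law_of T R)
              = (\<integral>\<^sup>+ p. min (fst p) (snd p) \<partial>(T \<Otimes>\<^sub>M R)) / emeasure (T \<Otimes>\<^sub>M R) {p. fst p \<le> snd p}
          \<and> mean (reset_law_of T R)
              = (\<integral>\<^sup>+ r. intFbar T r \<partial>R) / (\<integral>\<^sup>+ r. ennreal (Fdist T r) \<partial>R)
          \<and> (INF t\<in>{0<..}. ratio T t) \<le> mean (reset_law_of T R)
          \<and> mean (reset_law_of T R) \<le> (SUP t\<in>{0<..}. ratio T t))
     \<and> (SUP R\<in>{R. reset_law R}. mean (reset_law_of T R))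
          = (SUP r\<in>{0<..}. mean (reset_law_of T (return borel (ennreal r))))
     \<and> (SUP r\<in>{0<..}. mean (reset_law_of T (return borel (ennreal r))))
          = (SUP t\<in>{0<..}. ratio T t)
     \<and> (INF R\<in>{R. reset_law R}. mean (reset_law_of T R))
          = (INF r\<in>{0<..}. mean (reset_law_of T (return borel (ennreal r))))
     \<and> (INF r\<in>{0<..}. mean (reset_law_of T (return borel (ennreal r))))
          = (INF t\<in>{0<..}. ratio T t)"
proof -
  have dirac: "(SUP r\<in>{0<..}. mean (reset_law_of T (return borel (ennreal r)))) = (SUP t\<in>{0<..}. ratio T t)"
    "(INF r\<in>{0<..}. mean (reset_law_of T (return borel (ennreal r)))) = (INF t\<in>{0<..}. ratio T t)"
    by (auto intro!: SUP_cong INF_cong simp: mean_reset_law_of_return[OF hT])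
  show ?thesis
    unfolding dirac SUP_mean_reset_law_of[OF hT] INF_mean_reset_law_of[OF hT]
    using mean_reset_law_of_eq_integrals[OF hT] mean_reset_law_of_bounds[OF hT] by blast
qed

end
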